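(* Let $K\subseteq\mathbb{C}$ be a number field of class number $1$ that is stable under complex conjugation, let $\mathcal{O}_K$ be its ring of integers and $K_0:=K\cap\mathbb{R}$. Let $n$ be odd. If $v\in\mathcal{O}_K^n$ is a column of a matrix $A\in\mathcal{O}_K^{n\times n}$ with $A^*A=\lambda I$ where $\lambda=v^*v$, then there exists $r\in\mathcal{O}_K$ with $\lambda=r\overline{r}$ (and $\lambda\in\mathcal{O}_{K_0}$).
   Context: $A^*=\overline{A}^T$ denotes the conjugate transpose. In particular (taking $K=\mathbb{Q}(i)$), if $n$ is odd and $v\in\mathbb{Z}[i]^n$ is a column of an $n\times n$ Gaussian integer matrix $A$ with $A^*A=\lambda I$, then $\lambda$ is a sum of two squares of rational integers. *)

theory Defs
  imports "HOL-Analysis.Analysis" "HOL-Computational_Algebra.Polynomial"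
begin

definition subfield_of_complex :: "complex set \<Rightarrow> bool" where
  "subfield_of_complex K \<longleftrightarrow> 0 \<in> K \<and> 1 \<in> K \<and>
     (\<forall>x\<in>K. \<forall>y\<in>K. x + y \<in> K \<and> x * y \<in> K) \<and>
     (\<forall>x\<in>K. - x \<in> K) \<and> (\<forall>x\<in>K. x \<noteq> 0 \<longrightarrow> inverse x \<in> K)"

definition number_field :: "complex set \<Rightarrow> bool" where
  "number_field K \<longleftrightarrow> subfield_of_complex K \<and>
     (\<exists>B. finite B \<and> B \<subseteq> K \<and>
        (\<forall>x\<in>K. \<exists>c. (\<forall>b\<in>B. c b \<in> \<rat>) \<and> x = (\<Sum>b\<in>B. c b * b)))"

definition ring_of_integers :: "complex set \<Rightarrow> complex set" where
  "ring_of_integers K = {x \<in> K. algebraic_int x}"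

definition is_ideal_in :: "complex set \<Rightarrow> complex set \<Rightarrow> bool" where
  "is_ideal_in I R \<longleftrightarrow> I \<subseteq> R \<and> 0 \<in> I \<and>
     (\<forall>x\<in>I. \<forall>y\<in>I. x + y \<in> I) \<and> (\<forall>r\<in>R. \<forall>x\<in>I. r * x \<in> I)"

definition class_number_one :: "complex set \<Rightarrow> bool" where
  "class_number_one K \<longleftrightarrow>
     (\<forall>I. is_ideal_in I (ring_of_integers K) \<longrightarrow>
        (\<exists>a\<in>ring_of_integers K. I = {a * r | r. r \<in> ring_of_integers K}))"

definition conj_transpose :: "complex ^'n ^'m \<Rightarrow> complex ^'m ^'n" where
  "conj_transpose A = (\<chi> i j. cnj (A $ j $ i))"

end

theory Submission
  imports Defs Jordan_Normal_Form.Char_Poly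
begin

(* Write N(r) = r * cnj r. From A^* A = lambda I we get N(det A) = lambda^n, and for n = 2m + 1
   this reads N(det A) = lambda * N(lambda^m). As O_K is a principal ideal domain, cancelling
   gcd(det A, lambda^m) gives coprime p, q with N(p) = lambda * N(q); a Bezout relation
   a p + b q = 1 then shows that q divides cnj p, and the quotient s satisfies lambda = N(s).
   That algebraic integers form a ring is derived from the fact that eigenvalues of integer
   matrices are algebraic integers. *)

lemma algebraic_int_eigenvalue_of_int_mat:
  fixes C :: "int mat" and x :: complex
  assumes "C \<in> carrier_mat k k" and "eigenvalue (map_mat of_int C) x"
  shows "algebraic_int x"
proof -
  have C': "map_mat of_int C \<in> carrier_mat k k" using assms(1) by simp
  have "poly (map_poly of_int (char_poly C)) x = 0"
    using eigenvalue_root_char_poly[OF C'] assms(2) of_int_hom.char_poly_hom[OF assms(1)] by metis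
  moreover have "lead_coeff (char_poly C) = 1" using degree_monic_char_poly[OF assms(1)] by simp
  ultimately show ?thesis using algebraic_int_altdef_ipoly by blast
qed

definition int_span :: "complex set \<Rightarrow> complex set" where
  "int_span G = {\<Sum>g\<in>G. of_int (c g) * g | c. True}"

lemma int_spanI: "a = (\<Sum>g\<in>G. of_int (c g) * g) \<Longrightarrow> a \<in> int_span G"
  unfolding int_span_def by blast

lemma int_spanE:
  assumes "a \<in> int_span G"
  obtains c where "a = (\<Sum>g\<in>G. of_int (c g) * g)"
  using assms unfolding int_span_def by blast

lemma int_span_0: "0 \<in> int_span G"
  by (rule int_spanI[where c = "\<lambda>_. 0"]) simp

lemma int_span_add: "a \<in> int_span G \<Longrightarrow> b \<in> int_span G \<Longrightarrow> a + b \<in> int_span G"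
  by (elim int_spanE, rule int_spanI[where c = "\<lambda>g. _ g + _ g"]) (simp add: sum.distrib distrib_right)

lemma int_span_of_int_mult: "a \<in> int_span G \<Longrightarrow> of_int m * a \<in> int_span G"
  by (elim int_spanE, rule int_spanI[where c = "\<lambda>g. m * _ g"]) (simp add: sum_distrib_left mult.assoc)

lemma int_span_sum: "(\<And>i. i \<in> S \<Longrightarrow> f i \<in> int_span G) \<Longrightarrow> sum f S \<in> int_span G"
  by (induction S rule: infinite_finite_induct) (auto intro: int_span_0 int_span_add)

lemma int_span_generator:
  assumes "finite G" "g \<in> G"
  shows "g \<in> int_span G"
proof (rule int_spanI)
  have "(\<Sum>h\<in>G. of_int (if h = g then 1 else 0) * h) = (\<Sum>h\<in>G. if h = g then g else 0)"
    by (rule sum.cong) auto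
  then show "g = (\<Sum>h\<in>G. of_int (if h = g then 1 else 0) * h)"
    using assms by (simp add: sum.delta')
qed

lemma int_span_mult:
  assumes "a \<in> int_span G" "b \<in> int_span H" "finite G" "finite H"
  shows "a * b \<in> int_span ((\<lambda>(g, h). g * h) ` (G \<times> H))"
proof -
  obtain c d where a: "a = (\<Sum>g\<in>G. of_int (c g) * g)" and b: "b = (\<Sum>h\<in>H. of_int (d h) * h)"
    using assms(1,2) by (auto elim!: int_spanE)
  have "a * b = (\<Sum>g\<in>G. \<Sum>h\<in>H. of_int (c g * d h) * (g * h))"
    unfolding a b by (simp add: sum_product mult_ac)
  also have "\<dots> \<in> int_span ((\<lambda>(g, h). g * h) ` (G \<times> H))"
    using assms(3,4) by (intro int_span_sum int_span_of_int_mult int_span_generator) auto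
  finally show ?thesis .
qed

lemma int_span_mult_closed:
  assumes "finite G" "\<And>g. g \<in> G \<Longrightarrow> x * g \<in> int_span G" "a \<in> int_span G"
  shows "x * a \<in> int_span G"
proof -
  obtain c where a: "a = (\<Sum>g\<in>G. of_int (c g) * g)" using assms(3) by (rule int_spanE)
  have "x * a = (\<Sum>g\<in>G. of_int (c g) * (x * g))"
    unfolding a by (simp add: sum_distrib_left mult.left_commute)
  also have "\<dots> \<in> int_span G"
    using assms(2) by (intro int_span_sum int_span_of_int_mult)
  finally show ?thesis .
qed

text \<open>\<open>x\<close> is an eigenvalue of the integer matrix expressing the \<open>x g\<^sub>i\<close> in terms of the \<open>g\<^sub>j\<close>.\<close>
lemma algebraic_int_if_int_span_stable:
  assumes "finite G" "z \<in> int_span G" "z \<noteq> 0" "\<And>g. g \<in> G \<Longrightarrow> x * g \<in> int_span G"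
  shows "algebraic_int x"
proof -
  obtain f where f: "bij_betw f {..<card G} G"
    using ex_bij_betw_nat_finite[OF assms(1)] atLeast0LessThan by metis
  have "\<exists>c. x * f i = (\<Sum>g\<in>G. of_int (c g) * g)" if "i < card G" for i
  proof -
    have "x * f i \<in> int_span G" using assms(4) f that by (meson bij_betwE lessThan_iff)
    then show ?thesis by (metis int_spanE)
  qed
  then obtain c where c: "\<And>i. i < card G \<Longrightarrow> x * f i = (\<Sum>g\<in>G. of_int (c i g) * g)"
    by metis
  have "\<exists>g\<in>G. g \<noteq> 0"
    using assms(2,3) by (metis (no_types, lifting) int_spanE mult_zero_right sum.neutral)
  then obtain i0 where i0: "i0 < card G" "f i0 \<noteq> 0"
    using f by (metis bij_betw_iff_bijections lessThan_iff)
  define C :: "int mat" where "C = Matrix.mat (card G) (card G) (\<lambda>(i, j). c i (f j))"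
  define v where "v = Matrix.vec (card G) f"
  have "map_mat of_int C *\<^sub>v v = x \<cdot>\<^sub>v v"
  proof (rule eq_vecI)
    fix i assume i: "i < dim_vec (x \<cdot>\<^sub>v v)"
    have "x * f i = (\<Sum>j<card G. of_int (c i (f j)) * f j)"
      using c i sum.reindex_bij_betw[OF f, of "\<lambda>g. of_int (c i g) * g"] by (simp add: v_def)
    then show "(map_mat of_int C *\<^sub>v v) $ i = (x \<cdot>\<^sub>v v) $ i"
      using i by (simp add: C_def v_def scalar_prod_def atLeast0LessThan mult.commute)
  qed (simp add: C_def v_def)
  moreover have "v \<noteq> 0\<^sub>v (card G)"
    using i0 by (metis index_vec index_zero_vec(1) v_def)
  ultimately have "eigenvector (map_mat of_int C) v x"
    unfolding eigenvector_def by (simp add: C_def v_def)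
  then have "eigenvalue (map_mat of_int C) x"
    unfolding eigenvalue_def by blast
  then show ?thesis
    by (intro algebraic_int_eigenvalue_of_int_mat[of C "card G"]) (simp add: C_def)
qed

lemma power_degree_eq_of_monic_int_poly_root:
  fixes x :: "'a :: comm_ring_1"
  assumes "poly (map_poly of_int p) x = 0" "lead_coeff p = 1"
  shows "x ^ degree p = - (\<Sum>t<degree p. of_int (coeff p t) * x ^ t)"
proof -
  have "degree (map_poly (of_int :: int \<Rightarrow> 'a) p) = degree p"
    using assms(2) by (intro degree_map_poly) (metis leading_coeff_0_iff of_int_1 one_neq_zero)
  then have "0 = (\<Sum>t\<le>degree p. of_int (coeff p t) * x ^ t)"
    using assms(1) unfolding poly_altdef by (simp add: coeff_map_poly)
  also have "\<dots> = (\<Sum>t<degree p. of_int (coeff p t) * x ^ t) + x ^ degree p"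
    using assms(2) by (simp add: lessThan_Suc_atMost[symmetric])
  finally show ?thesis
    by (simp add: eq_neg_iff_add_eq_0 add.commute)
qed

lemma int_span_powers_of_algebraic_int:
  fixes x :: complex
  assumes "algebraic_int x"
  obtains G where "finite G" "G \<subseteq> range ((^) x)" "\<And>i. x ^ i \<in> int_span G"
proof -
  obtain p where p: "poly (map_poly of_int p) x = 0" "lead_coeff p = 1"
    using assms algebraic_int_altdef_ipoly by blast
  define G where "G = (\<lambda>t. x ^ t) ` {..<degree p}"
  have fin: "finite G" by (simp add: G_def)
  have monic_eq: "x ^ degree p = of_int (- 1) * (\<Sum>t<degree p. of_int (coeff p t) * x ^ t)"
    using power_degree_eq_of_monic_int_poly_root[OF p] by simp
  also have "\<dots> \<in> int_span G"
    using fin by (intro int_span_of_int_mult int_span_sum int_span_generator) (auto simp: G_def)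
  finally have top: "x ^ degree p \<in> int_span G" .
  have step: "x * g \<in> int_span G" if "g \<in> G" for g
  proof -
    obtain t where t: "t < degree p" "g = x ^ t" using \<open>g \<in> G\<close> by (auto simp: G_def)
    show ?thesis
    proof (cases "Suc t < degree p")
      case True
      then show ?thesis using t fin by (intro int_span_generator) (auto simp: G_def intro!: image_eqI[of _ _ "Suc t"])
    next
      case False
      then show ?thesis using t top by (metis Suc_lessI power_Suc)
    qed
  qed
  have "x ^ i \<in> int_span G" for i
  proof (induction i)
    case 0
    have "degree p \<noteq> 0"
    proof
      assume "degree p = 0"
      then show False using monic_eq by simp
    qed
    then show ?case using fin by (intro int_span_generator) (auto simp: G_def intro!: image_eqI[of 1 _ 0])
  next
    case (Suc i)
    then show ?case using int_span_mult_closed[OF fin step] by simp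
  qed
  then show thesis using fin by (intro that[of G]) (auto simp: G_def)
qed

lemma
  fixes x y :: complex
  assumes "algebraic_int x" "algebraic_int y"
  shows algebraic_int_plus: "algebraic_int (x + y)"
    and algebraic_int_times: "algebraic_int (x * y)"
proof -
  obtain Gx where Gx: "finite Gx" "Gx \<subseteq> range ((^) x)" "\<And>i. x ^ i \<in> int_span Gx"
    using int_span_powers_of_algebraic_int[OF assms(1)] by blast
  obtain Gy where Gy: "finite Gy" "Gy \<subseteq> range ((^) y)" "\<And>j. y ^ j \<in> int_span Gy"
    using int_span_powers_of_algebraic_int[OF assms(2)] by blast
  define G where "G = (\<lambda>(g, h). g * h) ` (Gx \<times> Gy)"
  have fin: "finite G" using Gx Gy by (simp add: G_def)
  have monomial: "x ^ i * y ^ j \<in> int_span G" for i j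
    unfolding G_def using Gx Gy by (intro int_span_mult) auto
  have one: "1 \<in> int_span G" using monomial[of 0 0] by simp
  have G_monomials: "\<exists>i j. g = x ^ i * y ^ j" if "g \<in> G" for g
    using that Gx(2) Gy(2) by (fastforce simp: G_def)
  show "algebraic_int (x + y)"
  proof (rule algebraic_int_if_int_span_stable[OF fin one one_neq_zero])
    fix g assume "g \<in> G"
    then obtain i j where "g = x ^ i * y ^ j" using G_monomials by blast
    then have "(x + y) * g = x ^ Suc i * y ^ j + x ^ i * y ^ Suc j" by (simp add: algebra_simps)
    then show "(x + y) * g \<in> int_span G" by (metis int_span_add monomial)
  qed
  show "algebraic_int (x * y)"
  proof (rule algebraic_int_if_int_span_stable[OF fin one one_neq_zero])
    fix g assume "g \<in> G"
    then obtain i j where "g = x ^ i * y ^ j" using G_monomials by blast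
    then have "(x * y) * g = x ^ Suc i * y ^ Suc j" by (simp add: algebra_simps)
    then show "(x * y) * g \<in> int_span G" by (simp only: monomial)
  qed
qed

hide_const (open) Matrix.mat Matrix.vec Matrix.row Determinant.det

lemma
  assumes "subfield_of_complex K"
  shows ring_of_integers_0: "0 \<in> ring_of_integers K"
    and ring_of_integers_1: "1 \<in> ring_of_integers K"
  using assms by (simp_all add: ring_of_integers_def subfield_of_complex_def)

lemma
  assumes "subfield_of_complex K" "x \<in> ring_of_integers K" "y \<in> ring_of_integers K"
  shows ring_of_integers_add: "x + y \<in> ring_of_integers K"
    and ring_of_integers_mult: "x * y \<in> ring_of_integers K"
  using assms algebraic_int_plus algebraic_int_times
  by (auto simp: ring_of_integers_def subfield_of_complex_def)

lemma ring_of_integers_uminus: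
  "subfield_of_complex K \<Longrightarrow> x \<in> ring_of_integers K \<Longrightarrow> - x \<in> ring_of_integers K"
  by (auto simp: ring_of_integers_def subfield_of_complex_def)

lemma ring_of_integers_cnj:
  "\<forall>z\<in>K. cnj z \<in> K \<Longrightarrow> x \<in> ring_of_integers K \<Longrightarrow> cnj x \<in> ring_of_integers K"
  by (auto simp: ring_of_integers_def)

lemma ring_of_integers_sum:
  "subfield_of_complex K \<Longrightarrow> (\<And>i. i \<in> S \<Longrightarrow> f i \<in> ring_of_integers K) \<Longrightarrow>
    sum f S \<in> ring_of_integers K"
  by (induction S rule: infinite_finite_induct) (auto intro: ring_of_integers_0 ring_of_integers_add)

lemma ring_of_integers_prod:
  "subfield_of_complex K \<Longrightarrow> (\<And>i. i \<in> S \<Longrightarrow> f i \<in> ring_of_integers K) \<Longrightarrow>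
    prod f S \<in> ring_of_integers K"
  by (induction S rule: infinite_finite_induct) (auto intro: ring_of_integers_1 ring_of_integers_mult)

lemma ring_of_integers_power:
  "subfield_of_complex K \<Longrightarrow> x \<in> ring_of_integers K \<Longrightarrow> x ^ n \<in> ring_of_integers K"
  using ring_of_integers_prod[of K "{..<n}" "\<lambda>_. x"] by simp

lemma det_in_ring_of_integers:
  fixes A :: "complex ^'n ^'n"
  assumes "subfield_of_complex K" "\<forall>i j. A $ i $ j \<in> ring_of_integers K"
  shows "det A \<in> ring_of_integers K"
  unfolding Determinants.det_def
proof (intro ring_of_integers_sum ring_of_integers_mult ring_of_integers_prod assms(1))
  fix p :: "'n \<Rightarrow> 'n"
  have "sign p = 1 \<or> sign p = -1" by (simp add: sign_def)
  then show "of_int (sign p) \<in> ring_of_integers K"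
    using ring_of_integers_1[OF assms(1)] ring_of_integers_uminus[OF assms(1)] by auto
qed (use assms(2) in auto)

lemma det_conj_transpose:
  fixes A :: "complex ^'n ^'n"
  shows "det (conj_transpose A) = cnj (det A)"
proof -
  have "conj_transpose A = transpose (\<chi> i j. cnj (A $ i $ j))"
    by (simp add: conj_transpose_def transpose_def)
  then have "det (conj_transpose A) = det (\<chi> i j. cnj (A $ i $ j))"
    by simp
  also have "\<dots> = cnj (det A)"
    unfolding Determinants.det_def by simp
  finally show ?thesis .
qed

lemma det_mult_cnj_det_eq_power:
  fixes A :: "complex ^'n ^'n"
  assumes "conj_transpose A ** A = mat c"
  shows "det A * cnj (det A) = c ^ CARD('n)"
proof -
  have "det A * cnj (det A) = det (conj_transpose A ** A)"
    by (simp add: det_mul det_conj_transpose)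
  also have "\<dots> = c ^ CARD('n)"
    unfolding assms by (subst det_diagonal) (auto simp: Finite_Cartesian_Product.mat_def)
  finally show ?thesis .
qed

lemma sum_cnj_mult_self_real:
  "(\<Sum>i\<in>S. cnj (f i) * f i) \<in> range complex_of_real"
proof -
  have "(\<Sum>i\<in>S. cnj (f i) * f i) = of_real (\<Sum>i\<in>S. (Re (f i))\<^sup>2 + (Im (f i))\<^sup>2)"
    by (simp add: complex_mult_cnj mult.commute[of "cnj _"])
  then show ?thesis by blast
qed

lemma is_ideal_in_ring_of_integers_two_generators:
  assumes K: "subfield_of_complex K" and "d \<in> ring_of_integers K" "q \<in> ring_of_integers K"
  shows "is_ideal_in {a * d + b * q | a b. a \<in> ring_of_integers K \<and> b \<in> ring_of_integers K}
           (ring_of_integers K)"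
proof -
  let ?O = "ring_of_integers K"
  define I where "I = {a * d + b * q | a b. a \<in> ?O \<and> b \<in> ?O}"
  have I_iff: "x \<in> I \<longleftrightarrow> (\<exists>a\<in>?O. \<exists>b\<in>?O. x = a * d + b * q)" for x
    unfolding I_def by blast
  have "I \<subseteq> ?O"
    using assms by (auto simp: I_iff intro!: ring_of_integers_add ring_of_integers_mult)
  moreover have "0 \<in> I"
    unfolding I_iff using ring_of_integers_0[OF K] by force
  moreover have "x + y \<in> I" if xy: "x \<in> I" "y \<in> I" for x y
  proof -
    obtain a b a' b' where "x = a * d + b * q" "y = a' * d + b' * q"
      and O: "a \<in> ?O" "b \<in> ?O" "a' \<in> ?O" "b' \<in> ?O"
      using xy unfolding I_iff by blast
    then have "x + y = (a + a') * d + (b + b') * q" by (simp add: algebra_simps)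
    with O show ?thesis unfolding I_iff by (blast intro: ring_of_integers_add[OF K])
  qed
  moreover have "r * x \<in> I" if r: "r \<in> ?O" and x: "x \<in> I" for r x
  proof -
    obtain a b where "x = a * d + b * q" and O: "a \<in> ?O" "b \<in> ?O"
      using x unfolding I_iff by blast
    then have "r * x = (r * a) * d + (r * b) * q" by (simp add: algebra_simps)
    with O r show ?thesis unfolding I_iff by (blast intro: ring_of_integers_mult[OF K])
  qed
  ultimately have "is_ideal_in I ?O"
    unfolding is_ideal_in_def by blast
  then show ?thesis by (simp only: I_def)
qed

lemma class_number_one_coprime_factorization:
  assumes K: "subfield_of_complex K" and "class_number_one K"
    and "d \<in> ring_of_integers K" "q \<in> ring_of_integers K" "q \<noteq> 0"
  obtains g d' q' a b where "g \<noteq> 0" "d = g * d'" "q = g * q'" "a * d' + b * q' = 1"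
    and "d' \<in> ring_of_integers K" "q' \<in> ring_of_integers K"
    and "a \<in> ring_of_integers K" "b \<in> ring_of_integers K"
proof -
  let ?O = "ring_of_integers K"
  obtain g where "g \<in> ?O" and ideal_eq:
    "{a * d + b * q | a b. a \<in> ?O \<and> b \<in> ?O} = {g * r | r. r \<in> ?O}"
    using assms(2) is_ideal_in_ring_of_integers_two_generators[OF assms(1,3,4)]
    unfolding class_number_one_def by blast
  have "d = 1 * d + 0 * q" "q = 0 * d + 1 * q" by simp_all
  then have "d \<in> {g * r | r. r \<in> ?O}" "q \<in> {g * r | r. r \<in> ?O}"
    unfolding ideal_eq[symmetric] using ring_of_integers_0[OF K] ring_of_integers_1[OF K] by blast+
  then obtain d' q' where d': "d = g * d'" "d' \<in> ?O" and q': "q = g * q'" "q' \<in> ?O"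
    by blast
  have "g = g * 1" by simp
  then have "g \<in> {a * d + b * q | a b. a \<in> ?O \<and> b \<in> ?O}"
    unfolding ideal_eq using ring_of_integers_1[OF K] by blast
  then obtain a b where ab: "g = a * d + b * q" "a \<in> ?O" "b \<in> ?O"
    by blast
  have "g \<noteq> 0" using assms(5) q' by auto
  moreover have "g * (a * d' + b * q') = g * 1"
    using ab(1) d'(1) q'(1) by (simp add: algebra_simps)
  ultimately show thesis
    using that d' q' ab(2,3) by simp
qed

lemma norm_ratio_of_coprime_is_norm:
  assumes "subfield_of_complex K" "\<forall>z\<in>K. cnj z \<in> K"
    and O: "p \<in> ring_of_integers K" "q \<in> ring_of_integers K" "lambda \<in> ring_of_integers K"
      "a \<in> ring_of_integers K" "b \<in> ring_of_integers K"
    and "q \<noteq> 0" and bezout: "a * p + b * q = 1" and norms: "p * cnj p = lambda * (q * cnj q)"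
  shows "\<exists>s\<in>ring_of_integers K. lambda = s * cnj s"
proof
  define s where "s = a * lambda * cnj q + b * cnj p"
  show "s \<in> ring_of_integers K"
    unfolding s_def using O
    by (intro ring_of_integers_add ring_of_integers_mult ring_of_integers_cnj assms(1,2))
  have qs: "q * s = cnj p"
  proof -
    have "q * s = a * (lambda * (q * cnj q)) + b * q * cnj p"
      unfolding s_def by (simp add: algebra_simps)
    also have "\<dots> = (a * p + b * q) * cnj p"
      unfolding norms[symmetric] by (simp add: algebra_simps)
    finally show ?thesis using bezout by simp
  qed
  have "(q * cnj q) * (s * cnj s) = (q * s) * cnj (q * s)" by (simp add: mult_ac)
  also have "\<dots> = (q * cnj q) * lambda" unfolding qs using norms by (simp add: mult_ac)
  finally show "lambda = s * cnj s" using \<open>q \<noteq> 0\<close> by simp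
qed

lemma class_number_one_norm_ratio_is_norm:
  assumes "subfield_of_complex K" "class_number_one K" "\<forall>z\<in>K. cnj z \<in> K"
    and "d \<in> ring_of_integers K" "q \<in> ring_of_integers K" "lambda \<in> ring_of_integers K"
    and "q \<noteq> 0" "d * cnj d = lambda * (q * cnj q)"
  shows "\<exists>s\<in>ring_of_integers K. lambda = s * cnj s"
proof -
  obtain g d' q' a b where g: "g \<noteq> 0" "d = g * d'" "q = g * q'" and bezout: "a * d' + b * q' = 1"
    and O: "d' \<in> ring_of_integers K" "q' \<in> ring_of_integers K"
      "a \<in> ring_of_integers K" "b \<in> ring_of_integers K"
    using class_number_one_coprime_factorization[OF assms(1,2,4,5,7)] by blast
  have "(g * cnj g) * (d' * cnj d') = (g * cnj g) * (lambda * (q' * cnj q'))"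
    using assms(8) unfolding g by (simp add: mult_ac)
  then have "d' * cnj d' = lambda * (q' * cnj q')"
    using g(1) by simp
  moreover have "q' \<noteq> 0" using assms(7) g(3) by simp
  ultimately show ?thesis
    using norm_ratio_of_coprime_is_norm[OF assms(1,3) O(1,2) assms(6) O(3,4)] bezout by blast
qed

theorem mainTheorem2:
  fixes K :: "complex set" and A :: "complex ^'n ^'n" and v :: "complex ^'n"
    and lambda :: complex and j :: 'n
  assumes "number_field K"
    and "class_number_one K"
    and "\<forall>x\<in>K. cnj x \<in> K"
    and "odd CARD('n)"
    and "\<forall>i k. A $ i $ k \<in> ring_of_integers K"
    and "v = column j A"
    and "conj_transpose A ** A = mat lambda"
    and "lambda = (\<Sum>i\<in>UNIV. cnj (v $ i) * v $ i)"
  shows "(\<exists>r\<in>ring_of_integers K. lambda = r * cnj r)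
         \<and> lambda \<in> ring_of_integers (K \<inter> complex_of_real ` UNIV)"
proof -
  have K: "subfield_of_complex K" using assms(1) by (simp add: number_field_def)
  have lambda_O: "lambda \<in> ring_of_integers K"
    unfolding assms(6,8) using assms(5)
    by (auto simp: column_def intro!: ring_of_integers_sum ring_of_integers_mult ring_of_integers_cnj K assms(3))
  have lambda_real: "lambda \<in> range complex_of_real"
    unfolding assms(8) by (rule sum_cnj_mult_self_real)
  obtain m where m: "CARD('n) = Suc (2 * m)" using assms(4) oddE by fastforce
  have "det A * cnj (det A) = lambda * (lambda ^ m * cnj (lambda ^ m))"
    using det_mult_cnj_det_eq_power[OF assms(7)] lambda_real unfolding m by (auto simp: mult_2 power_add)
  then have "\<exists>r\<in>ring_of_integers K. lambda = r * cnj r" if "lambda \<noteq> 0"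
    using class_number_one_norm_ratio_is_norm[OF K assms(2,3) det_in_ring_of_integers[OF K assms(5)]
        ring_of_integers_power[OF K lambda_O] lambda_O] that by simp
  moreover have "lambda = 0 \<Longrightarrow> \<exists>r\<in>ring_of_integers K. lambda = r * cnj r"
    using ring_of_integers_0[OF K] by auto
  ultimately have "\<exists>r\<in>ring_of_integers K. lambda = r * cnj r" by blast
  with lambda_O lambda_real show ?thesis by (simp add: ring_of_integers_def)
qed

end
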